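(* Let $p$ be any prime and $G=Z_{p^{\lambda_1}}\times\cdots\times Z_{p^{\lambda_n}}$ with $0<\lambda_1<\lambda_2<\cdots<\lambda_n$ (no repeated factors), and let $\mathbf a$ be a canonical tuple of $G$. Then $$O(\mathbf a)=\bigcup\{T(\mathbf b):\mathbf b\le\mathbf a\text{ and } b_i=a_i\text{ for each nondegenerate coordinate } i \text{ of }\mathbf a\}.$$
   Context: Set $\lambda_0=0$ and $a_0=0$ for any tuple. Tuples are ordered componentwise; $\Lambda(G)=\{\mathbf a\in\mathbb Z^n:\mathbf 0\le\mathbf a\le(\lambda_1,\dots,\lambda_n)\}$. For $\mathbf a\in\Lambda(G)$, $T(\mathbf a)$ is the set of $(g_1,\dots,g_n)\in G$ with $|g_i|=p^{a_i}$ for all $i$, and $O(\mathbf a)$ is the $\mathrm{Aut}(G)$-orbit containing $T(\mathbf a)$ (each type lies in a single orbit). A tuple $\mathbf a$ is canonical if (I) $a_i\ge a_{i-1}$ for $i\in\{2,\dots,n\}$ and (II) $a_{i+1}-a_i\le\lambda_{i+1}-\lambda_i$ for $i\in\{1,\dots,n-1\}$. A canonical $\mathbf a$ is degenerate at coordinate $i$ if $a_i=a_{i-1}$, or ($i\le n-1$ and) $a_{i+1}-a_i=\lambda_{i+1}-\lambda_i$; otherwise $i$ is nondegenerate. *)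

theory Defs
  imports "HOL-Computational_Algebra.Primes" "HOL-Algebra.Product_Groups" "HOL-Algebra.Elementary_Groups" "HOL-Algebra.Multiplicative_Group"
begin

definition abgrp :: "nat \<Rightarrow> nat \<Rightarrow> (nat \<Rightarrow> nat) \<Rightarrow> (nat \<Rightarrow> int) monoid" where
  "abgrp p n lam = product_group {1..n} (\<lambda>i. integer_mod_group (p ^ lam i))"

definition typeset :: "nat \<Rightarrow> nat \<Rightarrow> (nat \<Rightarrow> nat) \<Rightarrow> (nat \<Rightarrow> nat) \<Rightarrow> (nat \<Rightarrow> int) set" where
  "typeset p n lam a = {g \<in> carrier (abgrp p n lam).
      \<forall>i\<in>{1..n}. group.ord (integer_mod_group (p ^ lam i)) (g i) = p ^ a i}"

definition aut_orbit :: "('a, 'b) monoid_scheme \<Rightarrow> 'a \<Rightarrow> 'a set" where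
  "aut_orbit G x = (\<lambda>\<phi>. \<phi> x) ` iso G G"

definition canonical :: "nat \<Rightarrow> (nat \<Rightarrow> nat) \<Rightarrow> (nat \<Rightarrow> nat) \<Rightarrow> bool" where
  "canonical n lam a \<longleftrightarrow>
     (\<forall>i\<in>{1..n}. a i \<le> lam i) \<and>
     (\<forall>i\<in>{2..n}. a (i - 1) \<le> a i) \<and>
     (\<forall>i\<in>{1..<n}. a (i + 1) - a i \<le> lam (i + 1) - lam i)"

definition degenerate :: "nat \<Rightarrow> (nat \<Rightarrow> nat) \<Rightarrow> (nat \<Rightarrow> nat) \<Rightarrow> nat \<Rightarrow> bool" where
  "degenerate n lam a i \<longleftrightarrow>
     a i = (if i = 1 then 0 else a (i - 1)) \<or>
     (i \<le> n - 1 \<and> a (i + 1) - a i = lam (i + 1) - lam i)"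

end

theory Submission
  imports Defs
begin

text \<open>
  Write an element of T(a) as x with x_i = p^(lam_i - a_i) * (unit). An endomorphism sends x to
  f(x)_i = sum_j c_ij x_j mod p^lam_i, where p^lam_i divides p^lam_j c_ij. The canonical
  conditions (a and lam - a both nondecreasing) make every summand vanish after multiplication
  by p^(a_i), so types can only go down along the orbit; at a nondegenerate coordinate i the
  inequalities a_j < a_i (j < i) and lam_i - a_i < lam_j - a_j (j > i) are strict, so applying
  the same bound to the inverse automorphism shows that b_i = a_i there.

  Conversely, every coordinate i with a_i > 0 is dominated by a nondegenerate coordinate j, i.e.
  a_i <= a_j and lam_j - a_j <= lam_i - a_i (follow the run of equal a's to the left, or of
  equal lam - a to the right; both cannot stay flat at once since lam is strictly increasing).
  Then z_i |-> z_i + m z_j is well defined on G and can correct x_i to any y_i of smaller type,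
  while the nondegenerate coordinates are only rescaled by units. These triangular maps are
  automorphisms, and together they carry x to any y of the stated form.
\<close>

lemma power_dvd_of_dvd_mult_power:
  fixes q w :: int
  assumes "q \<noteq> 0" "e \<le> k" "q ^ k dvd q ^ e * w"
  shows "q ^ (k - e) dvd w"
proof -
  have "q ^ k = q ^ e * q ^ (k - e)" using assms(2) by (simp flip: power_add)
  then show ?thesis using assms(1,3) by simp
qed

lemma dvd_mult_power_of_power_dvd:
  fixes q w :: int
  assumes "q ^ j dvd w" "k \<le> e + j"
  shows "q ^ k dvd q ^ e * w"
proof -
  have "q ^ (e + j) dvd q ^ e * w" using assms(1) by (simp add: power_add mult_dvd_mono)
  then show ?thesis using assms(2) le_imp_power_dvd dvd_trans by blast
qed

lemma exact_power_factor:
  fixes q w :: int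
  assumes "q \<noteq> 0" "e \<le> k" "q ^ k dvd q ^ e * w" "\<not> q ^ k dvd q ^ (e - 1) * w"
  shows "\<exists>r. w = q ^ (k - e) * r \<and> \<not> q dvd r"
proof -
  obtain r where r: "w = q ^ (k - e) * r"
    using power_dvd_of_dvd_mult_power[OF assms(1-3)] by blast
  have "\<not> q dvd r"
  proof
    assume "q dvd r"
    then have "q ^ (k - e + 1) dvd w" using r by (simp add: mult_dvd_mono)
    then have "q ^ k dvd q ^ (e - 1) * w"
      by (rule dvd_mult_power_of_power_dvd) (use assms(3,4) in \<open>cases e; auto\<close>)
    with assms(4) show False ..
  qed
  with r show ?thesis by blast
qed

lemma exists_inverse_mod_prime_power:
  fixes q r :: int
  assumes "prime q" "\<not> q dvd r" "0 < k"
  shows "\<exists>v. \<not> q dvd v \<and> (v * r) mod q ^ k = 1"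
proof -
  have "coprime r (q ^ k)" using prime_imp_power_coprime[OF assms(1,2)] .
  then obtain v w where vw: "v * r + w * q ^ k = 1" using bezout_int[of r "q ^ k"] by auto
  have q1: "1 < q ^ k" using assms(1,3) prime_gt_1_int one_less_power by blast
  have "\<not> q dvd v"
  proof
    assume "q dvd v"
    moreover have "q dvd w * q ^ k" using assms(3) by (simp add: dvd_power)
    ultimately have "q dvd 1" using vw by (metis dvd_add dvd_mult2)
    then show False using assms(1) not_prime_unit by blast
  qed
  moreover have "(v * r) mod q ^ k = 1"
  proof -
    have "v * r - 1 = q ^ k * (- w)" using vw by (simp add: algebra_simps)
    then have "q ^ k dvd v * r - 1" by simp
    then have "(v * r) mod q ^ k = 1 mod q ^ k" by (simp add: mod_eq_dvd_iff)
    then show ?thesis using q1 by simp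
  qed
  ultimately show ?thesis by blast
qed

lemma mult_mod_mod_eq_of_dvd:
  fixes c d m a :: int
  assumes "c dvd m * d"
  shows "(m * (a mod d)) mod c = (m * a) mod c"
proof -
  have "m * a = m * d * (a div d) + m * (a mod d)"
    by (metis mult_div_mod_eq distrib_left mult.assoc)
  then have "m * (a mod d) - m * a = (m * d) * (- (a div d))" by simp
  then show ?thesis using assms by (simp add: mod_eq_dvd_iff)
qed

locale prime_power_product =
  fixes p n :: nat and lam :: "nat \<Rightarrow> nat"
  assumes prime_p: "prime p"
    and lam_pos: "\<And>i. i \<in> {1..n} \<Longrightarrow> 0 < lam i"
begin

abbreviation G :: "(nat \<Rightarrow> int) monoid" where "G \<equiv> abgrp p n lam"
abbreviation Z :: "nat \<Rightarrow> int monoid" where "Z i \<equiv> integer_mod_group (p ^ lam i)"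
abbreviation M :: "nat \<Rightarrow> int" where "M i \<equiv> int p ^ lam i"

lemma prime_int_p: "prime (int p)"
  using prime_p by simp

lemma p_gt_1: "1 < p"
  using prime_gt_1_nat[OF prime_p] .

lemma p_neq_0 [simp]: "p \<noteq> 0"
  using p_gt_1 by simp

lemma M_pos: "0 < M i"
  using p_gt_1 by simp

lemma M_gt_1: "i \<in> {1..n} \<Longrightarrow> 1 < M i"
  using lam_pos p_gt_1 by (simp add: one_less_power)

lemma carrier_Z: "carrier (Z i) = {0..<M i}"
  by (simp add: carrier_integer_mod_group)

lemma carrier_G: "carrier G = (\<Pi>\<^sub>E i\<in>{1..n}. {0..<M i})"
  unfolding abgrp_def carrier_product_group carrier_Z ..

lemma carrier_G_component: "x \<in> carrier G \<Longrightarrow> i \<in> {1..n} \<Longrightarrow> x i \<in> {0..<M i}"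
  by (auto simp: carrier_G)

lemma group_G: "group G"
  by (simp add: abgrp_def)

lemma finite_carrier_G: "finite (carrier G)"
  by (simp add: carrier_G finite_PiE)

lemma mult_G: "x \<otimes>\<^bsub>G\<^esub> y = (\<lambda>i\<in>{1..n}. (x i + y i) mod M i)"
  by (simp add: abgrp_def)

lemma one_G: "\<one>\<^bsub>G\<^esub> = (\<lambda>i\<in>{1..n}. 0)"
  by (simp add: abgrp_def)

lemma pow_G: "x \<in> carrier G \<Longrightarrow> x [^]\<^bsub>G\<^esub> (k::nat) = (\<lambda>i\<in>{1..n}. (int k * x i) mod M i)"
proof (induction k)
  case 0 then show ?case by (simp add: one_G)
next
  case (Suc k)
  have "x [^]\<^bsub>G\<^esub> Suc k = x [^]\<^bsub>G\<^esub> k \<otimes>\<^bsub>G\<^esub> x" by simp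
  then show ?case using Suc
    by (auto intro!: restrict_ext simp: mult_G mod_add_left_eq mod_add_right_eq distrib_right add.commute)
qed

lemma ord_Z_dvd_iff:
  assumes "w \<in> {0..<M i}"
  shows "group.ord (Z i) w dvd p ^ e \<longleftrightarrow> M i dvd int p ^ e * w"
proof -
  interpret Zi: group "Z i" by simp
  have "w \<in> carrier (Z i)" using assms carrier_Z by simp
  from Zi.pow_eq_id[OF this, of "p ^ e"] show ?thesis
    by (simp add: dvd_eq_mod_eq_0)
qed

lemma ord_Z_prime_power:
  assumes "w \<in> {0..<M i}"
  shows "\<exists>f. group.ord (Z i) w = p ^ f"
proof -
  interpret Zi: group "Z i" by simp
  have w: "w \<in> carrier (Z i)" using assms carrier_Z by simp
  have "order (Z i) = p ^ lam i"
    by (simp add: order_def carrier_Z nat_power_eq)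
  then have "Zi.ord w dvd p ^ lam i" using Zi.ord_dvd_group_order[OF w] by simp
  then show ?thesis using divides_primepow_nat[OF prime_p] by blast
qed

lemma typeset_dvd_iff:
  assumes "x \<in> typeset p n lam b" "i \<in> {1..n}"
  shows "M i dvd int p ^ e * x i \<longleftrightarrow> b i \<le> e"
proof -
  have "x i \<in> {0..<M i}" using assms by (auto simp: typeset_def carrier_G)
  moreover have "group.ord (Z i) (x i) = p ^ b i" using assms by (auto simp: typeset_def)
  ultimately have "M i dvd int p ^ e * x i \<longleftrightarrow> p ^ b i dvd p ^ e"
    using ord_Z_dvd_iff[of "x i" i e] by simp
  then show ?thesis using p_gt_1 by (simp add: dvd_power_iff_le)
qed

lemma exists_typeset: "y \<in> carrier G \<Longrightarrow> \<exists>b. y \<in> typeset p n lam b"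
proof -
  assume y: "y \<in> carrier G"
  have "\<forall>i\<in>{1..n}. \<exists>f. group.ord (Z i) (y i) = p ^ f"
    using ord_Z_prime_power carrier_G_component[OF y] by blast
  then obtain b where "\<forall>i\<in>{1..n}. group.ord (Z i) (y i) = p ^ b i" by metis
  then show ?thesis using y unfolding typeset_def by blast
qed

lemma typeset_le_lam: "x \<in> typeset p n lam b \<Longrightarrow> i \<in> {1..n} \<Longrightarrow> b i \<le> lam i"
  using typeset_dvd_iff[of x b i "lam i"] by simp

lemma typeset_component_dvd:
  assumes "x \<in> typeset p n lam b" "i \<in> {1..n}"
  shows "int p ^ (lam i - b i) dvd x i"
  using power_dvd_of_dvd_mult_power[of "int p" "b i" "lam i" "x i"]
    typeset_dvd_iff[OF assms] typeset_le_lam[OF assms] M_pos by auto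

lemma typeset_component_exact:
  assumes "x \<in> typeset p n lam b" "i \<in> {1..n}" "0 < b i"
  shows "\<exists>r. x i = int p ^ (lam i - b i) * r \<and> \<not> int p dvd r"
  using exact_power_factor[of "int p" "b i" "lam i" "x i"]
    typeset_dvd_iff[OF assms(1,2)] typeset_le_lam[OF assms(1,2)] assms(3) M_pos by auto

lemma typeset_component_zero:
  assumes "x \<in> typeset p n lam b" "i \<in> {1..n}" "b i = 0"
  shows "x i = 0"
proof -
  have "M i dvd x i" using typeset_dvd_iff[OF assms(1,2), of 0] assms(3) by simp
  moreover have "x i \<in> {0..<M i}" using assms by (auto simp: typeset_def carrier_G)
  ultimately show ?thesis by (auto simp: dvd_eq_mod_eq_0)
qed

definition basis :: "nat \<Rightarrow> nat \<Rightarrow> int" where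
  "basis j = (\<lambda>l\<in>{1..n}. if l = j then 1 else 0)"

definition truncation :: "nat \<Rightarrow> (nat \<Rightarrow> int) \<Rightarrow> nat \<Rightarrow> int" where
  "truncation k z = (\<lambda>l\<in>{1..n}. if l \<le> k then z l else 0)"

lemma basis_carrier: "j \<in> {1..n} \<Longrightarrow> basis j \<in> carrier G"
  using M_gt_1 M_pos by (auto simp: carrier_G basis_def)

lemma basis_pow_order: "j \<in> {1..n} \<Longrightarrow> basis j [^]\<^bsub>G\<^esub> (p ^ lam j) = \<one>\<^bsub>G\<^esub>"
  by (simp add: pow_G basis_carrier one_G) (auto intro!: restrict_ext simp: basis_def)

lemma truncation_0: "truncation 0 z = \<one>\<^bsub>G\<^esub>"
  by (auto intro!: restrict_ext simp: truncation_def one_G)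

lemma truncation_Suc:
  assumes "z \<in> carrier G" "Suc k \<le> n"
  shows "truncation (Suc k) z = truncation k z \<otimes>\<^bsub>G\<^esub> basis (Suc k) [^]\<^bsub>G\<^esub> nat (z (Suc k))"
proof -
  have j: "Suc k \<in> {1..n}" using assms(2) by simp
  show ?thesis
    using assms(1) carrier_G_component[OF assms(1) j]
    unfolding pow_G[OF basis_carrier[OF j]] mult_G
    by (auto intro!: restrict_ext simp: truncation_def basis_def carrier_G PiE_iff le_Suc_eq)
qed

lemma truncation_n: "z \<in> carrier G \<Longrightarrow> truncation n z = z"
  by (auto intro!: extensionalityI[of _ "{1..n}"] simp: truncation_def carrier_G PiE_iff)

lemma truncation_carrier: "z \<in> carrier G \<Longrightarrow> truncation k z \<in> carrier G"
  using M_pos by (auto simp: carrier_G truncation_def PiE_iff)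

lemma hom_apply_eq_sum:
  assumes f: "f \<in> hom G G" and z: "z \<in> carrier G" and i: "i \<in> {1..n}"
  shows "f z i = (\<Sum>j\<in>{1..n}. z j * f (basis j) i) mod M i"
proof -
  have "f (truncation k z) i = (\<Sum>j\<in>{1..k}. z j * f (basis j) i) mod M i" if "k \<le> n" for k
    using that
  proof (induction k)
    case 0
    show ?case
      by (simp only: truncation_0 hom_one[OF f group_G group_G]) (use i in \<open>simp add: one_G\<close>)
  next
    case (Suc k)
    have j: "Suc k \<in> {1..n}" using Suc.prems by simp
    have zj: "int (nat (z (Suc k))) = z (Suc k)"
      using carrier_G_component[OF z j] by simp
    have "basis (Suc k) [^]\<^bsub>G\<^esub> nat (z (Suc k)) \<in> carrier G"
      using monoid.nat_pow_closed[OF group.is_monoid[OF group_G] basis_carrier[OF j]] .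
    then have "f (truncation (Suc k) z)
        = f (truncation k z) \<otimes>\<^bsub>G\<^esub> f (basis (Suc k)) [^]\<^bsub>G\<^esub> nat (z (Suc k))"
      using truncation_Suc[OF z Suc.prems] hom_nat_pow[OF f basis_carrier[OF j] group_G group_G]
        hom_mult[OF f truncation_carrier[OF z]]
      by simp
    also have "\<dots> = (\<lambda>l\<in>{1..n}. (f (truncation k z) l + (z (Suc k) * f (basis (Suc k)) l) mod M l) mod M l)"
      unfolding pow_G[OF hom_in_carrier[OF f basis_carrier[OF j]]] mult_G zj
      by (auto intro!: restrict_ext)
    finally have "f (truncation (Suc k) z) i
        = (f (truncation k z) i + (z (Suc k) * f (basis (Suc k)) i) mod M i) mod M i"
      using i by simp
    also have "\<dots> = (\<Sum>j\<in>{1..Suc k}. z j * f (basis j) i) mod M i"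
      using Suc by (simp add: mod_add_eq add.commute)
    finally show ?case .
  qed
  from this[of n] show ?thesis using truncation_n[OF z] by simp
qed

lemma hom_basis_annihilated:
  assumes f: "f \<in> hom G G" and i: "i \<in> {1..n}" and j: "j \<in> {1..n}"
  shows "M i dvd int p ^ lam j * f (basis j) i"
proof -
  have "f (basis j) [^]\<^bsub>G\<^esub> (p ^ lam j) = f (basis j [^]\<^bsub>G\<^esub> (p ^ lam j))"
    using hom_nat_pow[OF f basis_carrier[OF j] group_G group_G] by simp
  also have "\<dots> = \<one>\<^bsub>G\<^esub>"
    using basis_pow_order[OF j] hom_one[OF f group_G group_G] by simp
  finally have "f (basis j) [^]\<^bsub>G\<^esub> (p ^ lam j) = \<one>\<^bsub>G\<^esub>" .
  then have "(int (p ^ lam j) * f (basis j) i) mod M i = 0"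
    using i hom_in_carrier[OF f basis_carrier[OF j]] by (simp add: pow_G one_G fun_eq_iff split: if_splits)
  then show ?thesis by (simp add: dvd_eq_mod_eq_0)
qed

lemma hom_component_dvd:
  assumes f: "f \<in> hom G G" and x: "x \<in> typeset p n lam t" and i: "i \<in> {1..n}"
    and t: "\<And>j. j \<in> {1..n} \<Longrightarrow> t j \<le> e \<or> lam i + t j \<le> e + lam j"
  shows "M i dvd int p ^ e * f x i"
proof -
  have xc: "x \<in> carrier G" using x by (simp add: typeset_def)
  have term_dvd: "M i dvd int p ^ e * (x j * f (basis j) i)" if j: "j \<in> {1..n}" for j
  proof (cases "t j \<le> e")
    case True
    then have "M j dvd int p ^ e * x j" using typeset_dvd_iff[OF x j] by simp
    then have "M j * f (basis j) i dvd int p ^ e * x j * f (basis j) i" by (rule mult_dvd_mono) simp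
    moreover have "M i dvd M j * f (basis j) i" using hom_basis_annihilated[OF f i j] by simp
    ultimately show ?thesis by (simp add: mult.assoc dvd_trans)
  next
    case False
    then have "lam i \<le> e + (lam j - t j)" using t[OF j] by linarith
    then have "M i dvd int p ^ e * x j"
      using dvd_mult_power_of_power_dvd typeset_component_dvd[OF x j] by blast
    then show ?thesis by (simp add: mult.assoc[symmetric])
  qed
  have "(int p ^ e * f x i) mod M i = (int p ^ e * (\<Sum>j\<in>{1..n}. x j * f (basis j) i)) mod M i"
    using hom_apply_eq_sum[OF f xc i] by (simp add: mod_mult_right_eq)
  also have "\<dots> = 0"
    unfolding sum_distrib_left dvd_eq_mod_eq_0[symmetric] by (rule dvd_sum) (rule term_dvd)
  finally show ?thesis by (simp add: dvd_eq_mod_eq_0)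
qed

text \<open>The divisibility M i dvd m i * M (s i) makes z_(s i) \<mapsto> m i * z_(s i) well defined
  modulo M i; triangularity (a source coordinate is itself only rescaled by a unit) gives
  injectivity.\<close>

lemma triangular_map_iso:
  assumes u: "\<And>i. i \<in> {1..n} \<Longrightarrow> \<not> int p dvd u i"
    and s: "\<And>i. i \<in> {1..n} \<Longrightarrow> s i \<in> {1..n}"
    and m: "\<And>i. i \<in> {1..n} \<Longrightarrow> M i dvd m i * M (s i)"
    and triangular: "\<And>i. i \<in> {1..n} \<Longrightarrow> m i \<noteq> 0 \<Longrightarrow> m (s i) = 0"
  shows "(\<lambda>z. \<lambda>i\<in>{1..n}. (u i * z i + m i * z (s i)) mod M i) \<in> iso G G"
    (is "?\<phi> \<in> iso G G")
proof -
  have closed: "?\<phi> z \<in> carrier G" for z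
    using M_pos by (auto simp: carrier_G)
  have hom: "?\<phi> \<in> hom G G"
  proof (rule homI)
    fix x y assume x: "x \<in> carrier G" and y: "y \<in> carrier G"
    have "(u i * ((x i + y i) mod M i) + m i * ((x (s i) + y (s i)) mod M (s i))) mod M i
        = ((u i * x i + m i * x (s i)) mod M i + (u i * y i + m i * y (s i)) mod M i) mod M i"
      if i: "i \<in> {1..n}" for i
    proof -
      have "(u i * ((x i + y i) mod M i) + m i * ((x (s i) + y (s i)) mod M (s i))) mod M i
          = (u i * (x i + y i) + m i * (x (s i) + y (s i))) mod M i"
        using mult_mod_mod_eq_of_dvd[OF m[OF i]] by (metis mod_add_cong mod_mult_right_eq)
      then show ?thesis by (simp add: mod_add_eq algebra_simps)
    qed
    then show "?\<phi> (x \<otimes>\<^bsub>G\<^esub> y) = ?\<phi> x \<otimes>\<^bsub>G\<^esub> ?\<phi> y"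
      using s by (auto intro!: restrict_ext simp: mult_G)
  qed (rule closed)
  have inj: "inj_on ?\<phi> (carrier G)"
  proof (rule inj_onI)
    fix x y assume x: "x \<in> carrier G" and y: "y \<in> carrier G" and eq: "?\<phi> x = ?\<phi> y"
    have component_eq: "x i = y i"
      if i: "i \<in> {1..n}" and source: "m i * x (s i) = m i * y (s i)" for i
    proof -
      have "(u i * x i + m i * x (s i)) mod M i = (u i * y i + m i * y (s i)) mod M i"
        using fun_cong[OF eq, of i] i by simp
      then have "M i dvd u i * (x i - y i)"
        using source by (simp add: mod_eq_dvd_iff algebra_simps)
      moreover have "coprime (u i) (M i)"
        using prime_imp_power_coprime[OF prime_int_p u[OF i]] .
      ultimately have "M i dvd x i - y i"
        by (metis coprime_commute coprime_dvd_mult_right_iff)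
      then show ?thesis
        using carrier_G_component[OF x i] carrier_G_component[OF y i]
        by (simp flip: mod_eq_dvd_iff)
    qed
    have "x i = y i" if i: "i \<in> {1..n}" for i
    proof (cases "m i = 0")
      case False
      then have "x (s i) = y (s i)"
        using component_eq[OF s[OF i]] triangular[OF i] by simp
      then show ?thesis using component_eq[OF i] by simp
    qed (use component_eq[OF i] in simp)
    then show "x = y"
      using x y by (intro extensionalityI[of _ "{1..n}"]) (auto simp: carrier_G PiE_iff)
  qed
  have "?\<phi> ` carrier G = carrier G"
    using endo_inj_surj[OF finite_carrier_G _ inj] closed by blast
  then show ?thesis using hom inj by (auto simp: iso_def bij_betw_def)
qed

lemma in_aut_orbit_if_triangular:
  fixes S :: "nat set"
  assumes x: "x \<in> carrier G" and y: "y \<in> carrier G"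
    and components: "\<And>i. i \<in> {1..n} \<Longrightarrow> \<exists>u m s. \<not> int p dvd u \<and> s \<in> {1..n}
        \<and> M i dvd m * M s \<and> (m \<noteq> 0 \<longrightarrow> s \<in> S) \<and> (i \<in> S \<longrightarrow> m = 0)
        \<and> (u * x i + m * x s) mod M i = y i"
  shows "y \<in> aut_orbit G x"
proof -
  obtain u m s where ums: "\<And>i. i \<in> {1..n} \<Longrightarrow> \<not> int p dvd u i \<and> s i \<in> {1..n}
        \<and> M i dvd m i * M (s i) \<and> (m i \<noteq> 0 \<longrightarrow> s i \<in> S) \<and> (i \<in> S \<longrightarrow> m i = 0)
        \<and> (u i * x i + m i * x (s i)) mod M i = y i"
    using components by metis
  have "(\<lambda>z. \<lambda>i\<in>{1..n}. (u i * z i + m i * z (s i)) mod M i) \<in> iso G G"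
    by (rule triangular_map_iso) (use ums in auto)
  moreover have "(\<lambda>i\<in>{1..n}. (u i * x i + m i * x (s i)) mod M i) = y"
    using y ums by (intro extensionalityI[of _ "{1..n}"]) (auto simp: carrier_G PiE_iff)
  ultimately show ?thesis unfolding aut_orbit_def by force
qed

lemma unit_multiple_of_same_order:
  assumes x: "x \<in> typeset p n lam a" and y: "y \<in> typeset p n lam b" and i: "i \<in> {1..n}"
    and same: "b i = a i" and pos: "0 < a i"
  shows "\<exists>u. \<not> int p dvd u \<and> (u * x i) mod M i = y i"
proof -
  obtain r where r: "x i = int p ^ (lam i - a i) * r" "\<not> int p dvd r"
    using typeset_component_exact[OF x i pos] by blast
  obtain r' where r': "y i = int p ^ (lam i - a i) * r'" "\<not> int p dvd r'"
    using typeset_component_exact[OF y i] same pos by auto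
  obtain v where v: "\<not> int p dvd v" "(v * r) mod M i = 1"
    using exists_inverse_mod_prime_power[OF prime_int_p r(2) lam_pos[OF i]] by blast
  have "(r' * v * x i) mod M i = (int p ^ (lam i - a i) * r' * (v * r)) mod M i"
    by (simp add: r(1) algebra_simps)
  also have "\<dots> = (int p ^ (lam i - a i) * r') mod M i"
    by (metis mod_mult_right_eq mult.right_neutral v(2))
  also have "\<dots> = y i"
    using r'(1) carrier_G_component[of y i] y i by (simp add: typeset_def)
  finally have "(r' * v * x i) mod M i = y i" .
  moreover have "\<not> int p dvd r' * v"
    using r'(2) v(1) prime_int_p by (simp add: prime_dvd_mult_iff)
  ultimately show ?thesis by blast
qed

lemma component_reachable_from_dominating:
  assumes x: "x \<in> typeset p n lam a" and y: "y \<in> typeset p n lam b"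
    and i: "i \<in> {1..n}" and j: "j \<in> {1..n}"
    and "b i \<le> a i" and pos: "0 < a j"
    and dominates: "a i \<le> a j" "lam j - a j \<le> lam i - a i"
  shows "\<exists>m. M i dvd m * M j \<and> (x i + m * x j) mod M i = y i"
proof -
  define ci cj where "ci = lam i - a i" and "cj = lam j - a j"
  have le_lam: "a i \<le> lam i" "a j \<le> lam j"
    using typeset_le_lam[OF x] i j by auto
  have "int p ^ ci dvd int p ^ (lam i - b i)"
    unfolding ci_def using \<open>b i \<le> a i\<close> by (intro le_imp_power_dvd) simp
  then have "int p ^ ci dvd y i - x i"
    using typeset_component_dvd[OF y i] typeset_component_dvd[OF x i]
    by (simp add: ci_def dvd_diff dvd_trans)
  then obtain t where t: "y i - x i = int p ^ ci * t" by blast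
  obtain r where r: "x j = int p ^ cj * r" "\<not> int p dvd r"
    using typeset_component_exact[OF x j pos] by (auto simp: cj_def)
  obtain v where v: "(v * r) mod M i = 1"
    using exists_inverse_mod_prime_power[OF prime_int_p r(2) lam_pos[OF i]] by blast
  define m where "m = int p ^ (ci - cj) * t * v"
  have "cj \<le> ci" using dominates(2) by (simp add: ci_def cj_def)
  then have "int p ^ ci = int p ^ (ci - cj) * int p ^ cj" by (simp flip: power_add)
  then have "m * x j = int p ^ ci * t * (v * r)"
    by (simp add: m_def r(1) algebra_simps)
  then have "(x i + m * x j) mod M i = (x i + int p ^ ci * t) mod M i"
    by (metis mod_add_cong mod_mult_right_eq mult.right_neutral v)
  also have "\<dots> = y i"
    using t carrier_G_component[of y i] y i by (simp add: typeset_def)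
  finally have reach: "(x i + m * x j) mod M i = y i" .
  have "lam i \<le> ci - cj + lam j"
    using dominates le_lam by (simp add: ci_def cj_def)
  then have "M i dvd int p ^ (ci - cj + lam j)" by (rule le_imp_power_dvd)
  then have "M i dvd int p ^ (ci - cj) * M j * (t * v)" by (simp add: power_add)
  then have "M i dvd m * M j" by (simp add: m_def ac_simps)
  with reach show ?thesis by blast
qed

end

locale canonical_tuple = prime_power_product +
  fixes a :: "nat \<Rightarrow> nat"
  assumes lam_strict: "\<And>i. i \<in> {1..<n} \<Longrightarrow> lam i < lam (i + 1)"
    and canonical: "canonical n lam a"
begin

definition nondegenerate :: "nat set" where
  "nondegenerate = {i \<in> {1..n}. \<not> degenerate n lam a i}"

abbreviation cotype :: "nat \<Rightarrow> nat" where
  "cotype i \<equiv> lam i - a i"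

lemma a_le_lam: "i \<in> {1..n} \<Longrightarrow> a i \<le> lam i"
  using canonical by (simp add: canonical_def)

lemma a_le_Suc: "k \<in> {1..<n} \<Longrightarrow> a k \<le> a (Suc k)"
proof -
  assume "k \<in> {1..<n}"
  then have "Suc k \<in> {2..n}" by simp
  then show ?thesis using canonical unfolding canonical_def by fastforce
qed

lemma cotype_le_Suc: "k \<in> {1..<n} \<Longrightarrow> cotype k \<le> cotype (Suc k)"
proof -
  assume k: "k \<in> {1..<n}"
  have "a (k + 1) - a k \<le> lam (k + 1) - lam k" using canonical k by (simp add: canonical_def)
  moreover have "a k \<le> lam k" using a_le_lam k by simp
  ultimately show ?thesis using a_le_Suc[OF k] lam_strict[OF k] by simp
qed

lemma a_mono: "1 \<le> i \<Longrightarrow> i \<le> j \<Longrightarrow> j \<le> n \<Longrightarrow> a i \<le> a j"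
  by (rule lift_Suc_mono_le_ivl[where N = "{1..<n}"]) (auto intro: a_le_Suc)

lemma cotype_mono: "1 \<le> i \<Longrightarrow> i \<le> j \<Longrightarrow> j \<le> n \<Longrightarrow> cotype i \<le> cotype j"
  by (rule lift_Suc_mono_le_ivl[where N = "{1..<n}"]) (auto intro: cotype_le_Suc)

lemma not_both_flat: "k \<in> {1..<n} \<Longrightarrow> a k = a (k + 1) \<Longrightarrow> cotype k \<noteq> cotype (k + 1)"
  using lam_strict a_le_lam[of k] by force

lemma degenerate_iff:
  assumes "i \<in> {1..n}"
  shows "degenerate n lam a i \<longleftrightarrow>
    a i = (if i = 1 then 0 else a (i - 1)) \<or> (i < n \<and> cotype i = cotype (i + 1))"
proof -
  have "a (i + 1) - a i = lam (i + 1) - lam i \<longleftrightarrow> cotype i = cotype (i + 1)" if "i < n"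
  proof -
    have "i \<in> {1..<n}" using assms that by simp
    then show ?thesis
      using a_le_Suc lam_strict a_le_lam[OF assms] a_le_lam[of "i + 1"] by force
  qed
  then show ?thesis using assms unfolding degenerate_def by auto
qed

lemma nondegenerate_subset: "nondegenerate \<subseteq> {1..n}"
  by (auto simp: nondegenerate_def)

lemma nondegenerate_pos:
  assumes "i \<in> nondegenerate"
  shows "0 < a i"
proof (rule ccontr)
  assume "\<not> 0 < a i"
  moreover have i: "i \<in> {1..n}" using assms by (simp add: nondegenerate_def)
  moreover have "1 < i \<Longrightarrow> a (i - 1) \<le> a i" using a_mono i by simp
  ultimately have "degenerate n lam a i" by (auto simp: degenerate_iff)
  then show False using assms by (simp add: nondegenerate_def)
qed

lemma nondegenerate_a_less:
  assumes i: "i \<in> nondegenerate" and j: "1 \<le> j" "j < i"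
  shows "a j < a i"
proof -
  have "a (i - 1) \<noteq> a i" "i \<le> n" using i j by (auto simp: nondegenerate_def degenerate_iff)
  moreover have "a j \<le> a (i - 1)" "a (i - 1) \<le> a i" using a_mono j \<open>i \<le> n\<close> by auto
  ultimately show ?thesis by linarith
qed

lemma nondegenerate_cotype_less:
  assumes i: "i \<in> nondegenerate" and j: "i < j" "j \<le> n"
  shows "cotype i < cotype j"
proof -
  have "cotype i \<noteq> cotype (i + 1)" "1 \<le> i" using i j by (auto simp: nondegenerate_def degenerate_iff)
  moreover have "cotype i \<le> cotype (i + 1)" "cotype (i + 1) \<le> cotype j"
    using cotype_mono j \<open>1 \<le> i\<close> by auto
  ultimately show ?thesis by linarith
qed

lemma flat_run_left:
  "i \<in> {1..n} \<Longrightarrow> 0 < a i \<Longrightarrow>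
    (\<exists>j\<in>nondegenerate. j \<le> i \<and> a j = a i) \<or> (i < n \<and> cotype i = cotype (i + 1))"
proof (induction i rule: less_induct)
  case (less i)
  show ?case
  proof (cases "i \<in> nondegenerate")
    case False
    then have "a i = (if i = 1 then 0 else a (i - 1)) \<or> (i < n \<and> cotype i = cotype (i + 1))"
      using less.prems by (simp add: nondegenerate_def degenerate_iff)
    moreover have "\<exists>j\<in>nondegenerate. j \<le> i \<and> a j = a i" if "1 < i" "a i = a (i - 1)"
    proof -
      have "i - 1 \<in> {1..<n}" using that less.prems by auto
      then have "cotype (i - 1) \<noteq> cotype i"
        using not_both_flat[of "i - 1"] that by simp
      moreover have "(\<exists>j\<in>nondegenerate. j \<le> i - 1 \<and> a j = a (i - 1))
          \<or> (i - 1 < n \<and> cotype (i - 1) = cotype i)"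
        using less.IH[of "i - 1"] that less.prems by force
      ultimately obtain j where "j \<in> nondegenerate" "j \<le> i - 1" "a j = a (i - 1)" by blast
      then show ?thesis using that by (intro bexI[of _ j]) auto
    qed
    ultimately show ?thesis using less.prems by (auto split: if_splits)
  qed auto
qed

lemma flat_run_right:
  "i \<in> {1..n} \<Longrightarrow> 0 < a i \<Longrightarrow>
    (\<exists>j\<in>nondegenerate. i \<le> j \<and> cotype j = cotype i) \<or> (1 < i \<and> a i = a (i - 1))"
proof (induction i rule: measure_induct_rule[where f = "\<lambda>i. n - i"])
  case (less i)
  show ?case
  proof (cases "i \<in> nondegenerate")
    case False
    then have "a i = (if i = 1 then 0 else a (i - 1)) \<or> (i < n \<and> cotype i = cotype (i + 1))"
      using less.prems by (simp add: nondegenerate_def degenerate_iff)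
    moreover have "\<exists>j\<in>nondegenerate. i \<le> j \<and> cotype j = cotype i"
      if "i < n" "cotype i = cotype (i + 1)"
    proof -
      have i: "i \<in> {1..<n}" using that less.prems by auto
      then have "a i < a (i + 1)" using not_both_flat a_le_Suc that by fastforce
      then obtain j where "j \<in> nondegenerate" "i + 1 \<le> j" "cotype j = cotype (i + 1)"
        using less.IH[of "i + 1"] i by (auto simp: diff_less_mono2)
      then show ?thesis using that by (intro bexI[of _ j]) auto
    qed
    ultimately show ?thesis using less.prems by (auto split: if_splits)
  qed auto
qed

lemma exists_dominating_nondegenerate:
  assumes i: "i \<in> {1..n}" and pos: "0 < a i"
  shows "\<exists>j\<in>nondegenerate. a i \<le> a j \<and> cotype j \<le> cotype i"
proof -
  have left: ?thesis if j: "j \<in> nondegenerate" "j \<le> i" "a j = a i" for j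
  proof -
    have "cotype j \<le> cotype i" using cotype_mono[of j i] i j by (simp add: nondegenerate_def)
    then show ?thesis using j by (intro bexI[of _ j]) simp_all
  qed
  have right: ?thesis if j: "j \<in> nondegenerate" "i \<le> j" "cotype j = cotype i" for j
  proof -
    have "a i \<le> a j" using a_mono[of i j] i j by (simp add: nondegenerate_def)
    then show ?thesis using j by (intro bexI[of _ j]) simp_all
  qed
  show ?thesis
  proof (cases "\<exists>j\<in>nondegenerate. j \<le> i \<and> a j = a i")
    case True
    then show ?thesis using left by blast
  next
    case no_left: False
    have "\<not> (1 < i \<and> a i = a (i - 1))"
    proof
      assume flat: "1 < i \<and> a i = a (i - 1)"
      then have i': "i - 1 \<in> {1..n}" "0 < a (i - 1)" using i pos by auto
      have "i - 1 \<in> {1..<n}" using flat i by auto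
      then have "cotype (i - 1) \<noteq> cotype i" using not_both_flat flat by fastforce
      then show False using flat_run_left[OF i'] flat no_left by force
    qed
    then show ?thesis using flat_run_left[OF i pos] flat_run_right[OF i pos] no_left right by blast
  qed
qed


lemma hom_typeset_le:
  assumes f: "f \<in> hom G G" and x: "x \<in> typeset p n lam a"
    and fx: "f x \<in> typeset p n lam b" and i: "i \<in> {1..n}"
  shows "b i \<le> a i"
proof -
  have "a j \<le> a i \<or> lam i + a j \<le> a i + lam j" if j: "j \<in> {1..n}" for j
  proof (cases "j \<le> i")
    case False
    then have "cotype i \<le> cotype j" using cotype_mono i j by simp
    then show ?thesis using a_le_lam[OF i] a_le_lam[OF j] by arith
  qed (use a_mono i j in simp)
  then have "M i dvd int p ^ a i * f x i" by (rule hom_component_dvd[OF f x i])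
  then show ?thesis using typeset_dvd_iff[OF fx i] by simp
qed

lemma iso_typeset_nondegenerate_eq:
  assumes \<phi>: "\<phi> \<in> iso G G" and x: "x \<in> typeset p n lam a"
    and y: "\<phi> x \<in> typeset p n lam b" and i: "i \<in> nondegenerate"
  shows "b i = a i"
proof (rule ccontr)
  assume ne: "b i \<noteq> a i"
  have i1: "i \<in> {1..n}" using i nondegenerate_subset by blast
  have b_le: "b j \<le> a j" if "j \<in> {1..n}" for j
    using hom_typeset_le[OF iso_imp_homomorphism[OF \<phi>] x y that] by simp
  have pos: "0 < a i" using nondegenerate_pos[OF i] .
  define \<psi> where "\<psi> = inv_into (carrier G) \<phi>"
  have \<psi>: "\<psi> \<in> hom G G"
    using group.iso_set_sym[OF group_G \<phi>] by (simp add: \<psi>_def iso_def)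
  have "\<psi> (\<phi> x) = x"
    using \<phi> x by (simp add: \<psi>_def iso_def bij_betw_def typeset_def inv_into_f_f)
  moreover have "M i dvd int p ^ (a i - 1) * \<psi> (\<phi> x) i"
  proof (rule hom_component_dvd[OF \<psi> y i1])
    fix j assume j: "j \<in> {1..n}"
    consider "j < i" | "j = i" | "i < j" by linarith
    then show "b j \<le> a i - 1 \<or> lam i + b j \<le> a i - 1 + lam j"
    proof cases
      case 1
      then show ?thesis using nondegenerate_a_less[OF i] b_le[OF j] j by fastforce
    next
      case 2
      then show ?thesis using b_le[OF i1] ne by arith
    next
      case 3
      then have "cotype i < cotype j" using nondegenerate_cotype_less[OF i] j by simp
      then show ?thesis using b_le[OF j] a_le_lam[OF i1] a_le_lam[OF j] pos by arith
    qed
  qed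
  ultimately have "a i \<le> a i - 1" using typeset_dvd_iff[OF x i1] by simp
  then show False using pos by simp
qed

lemma aut_orbit_subset:
  assumes x: "x \<in> typeset p n lam a"
  shows "aut_orbit G x \<subseteq> \<Union> {typeset p n lam b | b.
           (\<forall>i\<in>{1..n}. b i \<le> a i) \<and> (\<forall>i\<in>{1..n}. \<not> degenerate n lam a i \<longrightarrow> b i = a i)}"
proof
  fix y assume "y \<in> aut_orbit G x"
  then obtain \<phi> where \<phi>: "\<phi> \<in> iso G G" and y: "y = \<phi> x" by (auto simp: aut_orbit_def)
  have "y \<in> carrier G"
    using \<phi> x y by (auto simp: typeset_def iso_def hom_in_carrier)
  then obtain b where b: "y \<in> typeset p n lam b" using exists_typeset by blast
  have "\<forall>i\<in>{1..n}. b i \<le> a i"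
    using hom_typeset_le[OF iso_imp_homomorphism[OF \<phi>] x] b y by blast
  moreover have "\<forall>i\<in>{1..n}. \<not> degenerate n lam a i \<longrightarrow> b i = a i"
    using iso_typeset_nondegenerate_eq[OF \<phi> x] b y by (simp add: nondegenerate_def)
  ultimately show "y \<in> \<Union> {typeset p n lam b | b.
           (\<forall>i\<in>{1..n}. b i \<le> a i) \<and> (\<forall>i\<in>{1..n}. \<not> degenerate n lam a i \<longrightarrow> b i = a i)}"
    using b by blast
qed

lemma typeset_subset_aut_orbit:
  assumes x: "x \<in> typeset p n lam a" and y: "y \<in> typeset p n lam b"
    and le: "\<forall>i\<in>{1..n}. b i \<le> a i"
    and eq: "\<forall>i\<in>{1..n}. \<not> degenerate n lam a i \<longrightarrow> b i = a i"
  shows "y \<in> aut_orbit G x"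
proof (rule in_aut_orbit_if_triangular[where S = nondegenerate])
  show "x \<in> carrier G" "y \<in> carrier G" using x y by (simp_all add: typeset_def)
  fix i assume i: "i \<in> {1..n}"
  show "\<exists>u m s. \<not> int p dvd u \<and> s \<in> {1..n} \<and> M i dvd m * M s
      \<and> (m \<noteq> 0 \<longrightarrow> s \<in> nondegenerate) \<and> (i \<in> nondegenerate \<longrightarrow> m = 0)
      \<and> (u * x i + m * x s) mod M i = y i"
  proof (cases "i \<in> nondegenerate")
    case True
    then obtain u where u: "\<not> int p dvd u" "(u * x i) mod M i = y i"
      using unit_multiple_of_same_order[OF x y i] eq nondegenerate_pos
      by (auto simp: nondegenerate_def)
    show ?thesis by (rule exI[of _ u], rule exI[of _ 0], rule exI[of _ i]) (use u i in simp)
  next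
    case False
    show ?thesis
    proof (cases "a i = 0")
      case True
      moreover have "b i = 0" using bspec[OF le i] True by simp
      ultimately have zero: "x i = 0" "y i = 0"
        using typeset_component_zero[OF x i] typeset_component_zero[OF y i] by auto
      show ?thesis
        by (rule exI[of _ 1], rule exI[of _ 0], rule exI[of _ i])
          (use zero i False p_gt_1 in simp)
    next
      case pos: False
      then obtain j where j: "j \<in> nondegenerate" "a i \<le> a j" "cotype j \<le> cotype i"
        using exists_dominating_nondegenerate[OF i] by auto
      then have j1: "j \<in> {1..n}" using nondegenerate_subset by blast
      obtain m where m: "M i dvd m * M j" "(x i + m * x j) mod M i = y i"
        using component_reachable_from_dominating[OF x y i j1] le i j nondegenerate_pos[OF j(1)]
        by auto
      show ?thesis
        by (rule exI[of _ 1], rule exI[of _ m], rule exI[of _ j])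
          (use m j j1 False p_gt_1 in simp)
    qed
  qed
qed

end

theorem mainTheorem6:
  fixes p n :: nat and lam a :: "nat \<Rightarrow> nat"
  assumes "prime p"
    and "0 < lam 1"
    and "\<forall>i\<in>{1..<n}. lam i < lam (i + 1)"
    and "canonical n lam a"
  shows "\<forall>x\<in>typeset p n lam a.
           aut_orbit (abgrp p n lam) x =
           \<Union> {typeset p n lam b | b.
                 (\<forall>i\<in>{1..n}. b i \<le> a i) \<and>
                 (\<forall>i\<in>{1..n}. \<not> degenerate n lam a i \<longrightarrow> b i = a i)}"
proof -
  have "0 < lam i" if "i \<in> {1..n}" for i
    using lift_Suc_mono_le_ivl[of "{1..<n}" lam 1 i] assms(2,3) that by fastforce
  then interpret canonical_tuple p n lam a
    using assms by unfold_locales auto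
  show ?thesis
    using aut_orbit_subset typeset_subset_aut_orbit by blast
qed

end
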